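(* For any integers $p\geq3$ and $k\geq1$, $\lambda^{(1)}(p,k)=\lambda^{(2)}(p,k)$ if and only if $p\leq k$.
   Context: $\lambda^{(1)}(p,k)=0$ if $k\in\{1,2\}$ and $\lambda^{(1)}(p,k)=\sqrt{p\frac{(k-1)^{k-1}}{(k-2)^{k-2}}}$ if $k>2$. For $\lambda>0$: $m_\lambda=\min\left\{1,\left(\frac{(p-2)\sqrt p}{\lambda\sqrt{p-1}}\right)^{1/k}\right\}$; $m_*(\lambda)$ is the largest solution $m\in(0,1]$ of $\frac{\lambda m^k}{\sqrt p}=\frac{m^2}{\sqrt{1-m^2}}$; and $\lambda^{(2)}(p,k)=\inf\{\lambda\geq\lambda^{(1)}(p,k): m_*(\lambda)\geq m_\lambda\}$. *)

theory Defs
  imports Complex_Main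
begin

definition lambda1 :: "nat \<Rightarrow> nat \<Rightarrow> real" where
  "lambda1 p k = (if k \<le> 2 then 0
     else sqrt (real p * (real k - 1) ^ (k - 1) / (real k - 2) ^ (k - 2)))"

definition m_lam :: "nat \<Rightarrow> nat \<Rightarrow> real \<Rightarrow> real" where
  "m_lam p k lam = min 1 (root k ((real p - 2) * sqrt (real p) / (lam * sqrt (real p - 1))))"

definition mstar_eq :: "nat \<Rightarrow> nat \<Rightarrow> real \<Rightarrow> real \<Rightarrow> bool" where
  "mstar_eq p k lam m \<longleftrightarrow> 0 < m \<and> m \<le> 1 \<and>
     lam * m ^ k / sqrt (real p) = m\<^sup>2 / sqrt (1 - m\<^sup>2)"

definition is_mstar :: "nat \<Rightarrow> nat \<Rightarrow> real \<Rightarrow> real \<Rightarrow> bool" where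
  "is_mstar p k lam m \<longleftrightarrow> mstar_eq p k lam m \<and> (\<forall>m'. mstar_eq p k lam m' \<longrightarrow> m' \<le> m)"

definition lambda2 :: "nat \<Rightarrow> nat \<Rightarrow> real" where
  "lambda2 p k = Inf {lam. lam > 0 \<and> lam \<ge> lambda1 p k \<and>
      (\<exists>m. is_mstar p k lam m \<and> m \<ge> m_lam p k lam)}"

end

theory Submission
  imports Defs
begin

text \<open>
  For 0 < m < 1 the fixed-point equation says that \<lambda> = lam_of p k m = \<surd>p / psi k m, where
  psi k m = m^(k-2) \<surd>(1 - m^2). For k \<ge> 3, psi k increases up to m_crit k = \<surd>((k-2)/(k-1))
  and strictly decreases after it, and lambda1 p k is exactly lam_of p k (m_crit k); for k \<le> 2
  it decreases on all of (0, 1). Hence a solution m \<ge> m_crit k is the largest one, and lam_of p k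
  strictly increases on [m_crit k, 1). Along a solution, the condition m \<ge> m_lam p k \<lambda> is
  equivalent to m \<ge> m_crit p. If p \<le> k then m_crit p \<le> m_crit k, so lambda1 p k itself is
  admissible and is the infimum. If k < p, every admissible \<lambda> is lam_of p k m for some
  m \<ge> m_crit p > m_crit k, so the infimum is lam_of p k (m_crit p), which exceeds lambda1 p k.
\<close>

lemma power_mult_one_minus_strict_decreasing:
  fixes t u :: real
  assumes "0 < t" "t < u" "u < 1" "real n / (real n + 1) \<le> t"
  shows "u ^ n * (1 - u) < t ^ n * (1 - t)"
proof -
  define d where "d = u - t"
  have u0: "0 < u" and d0: "0 < d" using assms by (auto simp: d_def)
  have "1 - real n * d / u \<le> (1 - d / u) ^ n"
    using Bernoulli_inequality[of "- d / u" n] u0 assms(1) by (simp add: d_def field_simps)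
  also have "1 - d / u = t / u" using u0 by (simp add: d_def field_simps)
  finally have bernoulli: "u ^ n * (1 - real n * d / u) \<le> t ^ n"
    using u0 by (simp add: power_divide field_simps)
  have "real n * (1 - t) \<le> t" using assms(4) by (simp add: field_simps)
  then have "0 < d * (u - real n * (1 - t))" using d0 assms(2) by (intro mult_pos_pos) auto
  also have "d * (u - real n * (1 - t)) = (u - real n * d) * (1 - t) - u * (1 - u)"
    by (simp add: d_def algebra_simps)
  finally have "1 - u < (1 - real n * d / u) * (1 - t)" using u0 by (simp add: field_simps)
  then have "u ^ n * (1 - u) < u ^ n * (1 - real n * d / u) * (1 - t)"
    using u0 by (simp add: mult.assoc)
  also have "\<dots> \<le> t ^ n * (1 - t)"
    using bernoulli assms(2,3) by (intro mult_right_mono) auto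
  finally show ?thesis .
qed

lemma sq_div_sqrt_strict_mono:
  fixes a b :: real
  assumes "0 \<le> a" "a < b" "b < 1"
  shows "a\<^sup>2 / sqrt (1 - a\<^sup>2) < b\<^sup>2 / sqrt (1 - b\<^sup>2)"
proof -
  have sb: "0 < sqrt (1 - b\<^sup>2)" "sqrt (1 - b\<^sup>2) \<le> sqrt (1 - a\<^sup>2)"
    using assms by (auto simp: power_mono abs_square_less_1)
  have "a\<^sup>2 / sqrt (1 - a\<^sup>2) \<le> a\<^sup>2 / sqrt (1 - b\<^sup>2)"
    using sb by (intro divide_left_mono) auto
  also have "\<dots> < b\<^sup>2 / sqrt (1 - b\<^sup>2)"
    using sb assms by (intro divide_strict_right_mono power_strict_mono) auto
  finally show ?thesis .
qed

lemma sq_div_sqrt_le_iff: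
  fixes a b :: real
  assumes "0 \<le> a" "a < 1" "0 \<le> b" "b < 1"
  shows "a\<^sup>2 / sqrt (1 - a\<^sup>2) \<le> b\<^sup>2 / sqrt (1 - b\<^sup>2) \<longleftrightarrow> a \<le> b"
  using sq_div_sqrt_strict_mono[of a b] sq_div_sqrt_strict_mono[of b a] assms
  by (cases "a = b") (auto simp: not_le[symmetric] less_le_not_le)

definition psi :: "nat \<Rightarrow> real \<Rightarrow> real" where
  "psi k m = m ^ k * sqrt (1 - m\<^sup>2) / m\<^sup>2"

definition lam_of :: "nat \<Rightarrow> nat \<Rightarrow> real \<Rightarrow> real" where
  "lam_of p k m = sqrt (real p) / psi k m"

text \<open>
  For k = 1 the quotient is -1/0 = 0 in HOL, so m_crit 1 = m_crit 2 = 0; this is the right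
  value, since psi 1 and psi 2 are decreasing on all of (0, 1).
\<close>
definition m_crit :: "nat \<Rightarrow> real" where
  "m_crit k = sqrt ((real k - 2) / (real k - 1))"

lemma psi_pos: "0 < m \<Longrightarrow> m < 1 \<Longrightarrow> 0 < psi k m"
  unfolding psi_def by (simp add: abs_square_less_1)

lemma psi_eq_sqrt:
  assumes "k \<ge> 2" "0 < m" "m < 1"
  shows "psi k m = sqrt ((m\<^sup>2) ^ (k - 2) * (1 - m\<^sup>2))"
proof -
  have "m ^ k = m\<^sup>2 * m ^ (k - 2)"
    using assms(1) by (metis le_add_diff_inverse power_add)
  then show ?thesis
    using assms by (simp add: psi_def real_sqrt_mult real_sqrt_power)
qed

lemma psi_strict_decreasing:
  assumes "k \<ge> 1" "m_crit k \<le> a" "0 < a" "a < b" "b < 1"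
  shows "psi k b < psi k a"
proof (cases "k = 1")
  case True
  have "sqrt (1 - b\<^sup>2) / b < sqrt (1 - a\<^sup>2) / b"
    using assms by (intro divide_strict_right_mono) (auto simp: power_strict_mono)
  also have "\<dots> \<le> sqrt (1 - a\<^sup>2) / a"
    using assms by (intro divide_left_mono) (auto simp: abs_square_le_1)
  finally show ?thesis
    using True assms by (simp add: psi_def power2_eq_square)
next
  case False
  then have k2: "k \<ge> 2" using assms(1) by simp
  have "(real k - 2) / (real k - 1) \<le> a\<^sup>2"
    using assms(2,3) k2 by (simp add: m_crit_def sqrt_le_D)
  then have "real (k - 2) / (real (k - 2) + 1) \<le> a\<^sup>2"
    using k2 by (simp add: of_nat_diff)
  then have "(b\<^sup>2) ^ (k - 2) * (1 - b\<^sup>2) < (a\<^sup>2) ^ (k - 2) * (1 - a\<^sup>2)"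
    using assms by (intro power_mult_one_minus_strict_decreasing)
      (auto simp: power_strict_mono abs_square_less_1)
  then show ?thesis
    using psi_eq_sqrt[OF k2] assms by simp
qed

lemma m_crit_pos_less_one: "k \<ge> 3 \<Longrightarrow> 0 < m_crit k \<and> m_crit k < 1"
  by (auto simp: m_crit_def)

lemma m_crit_strict_mono:
  assumes "2 \<le> j" "j < k"
  shows "m_crit j < m_crit k"
  using assms by (simp add: m_crit_def field_simps)

lemma m_crit_mono:
  assumes "1 \<le> j" "j \<le> k"
  shows "m_crit j \<le> m_crit k"
proof (cases "j = 1")
  case True
  then show ?thesis
    using assms by (cases "k = 1") (auto simp: m_crit_def intro!: divide_nonneg_nonneg)
next
  case False
  then show ?thesis
    using assms by (simp add: m_crit_def field_simps)
qed

lemma m_crit_sq_div_sqrt: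
  assumes "p \<ge> 2"
  shows "(m_crit p)\<^sup>2 / sqrt (1 - (m_crit p)\<^sup>2) = (real p - 2) / sqrt (real p - 1)"
proof -
  define q where "q = sqrt (real p - 1)"
  have q: "0 < q"
    using assms by (simp add: q_def)
  have "(m_crit p)\<^sup>2 = (real p - 2) / q\<^sup>2" "sqrt (1 - (m_crit p)\<^sup>2) = 1 / q"
    using assms by (simp_all add: m_crit_def q_def field_simps real_sqrt_divide)
  then have "(m_crit p)\<^sup>2 / sqrt (1 - (m_crit p)\<^sup>2) = (real p - 2) / q\<^sup>2 / (1 / q)"
    by (simp only:)
  also have "\<dots> = (real p - 2) / q"
    using q by (simp add: power2_eq_square)
  finally show ?thesis
    by (simp add: q_def)
qed

lemma psi_m_crit:
  assumes "k \<ge> 3"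
  shows "psi k (m_crit k) = sqrt ((real k - 2) ^ (k - 2) / (real k - 1) ^ (k - 1))"
proof -
  define t where "t = (real k - 2) / (real k - 1)"
  have t: "0 < t" "t < 1" using assms by (auto simp: t_def field_simps)
  have "psi k (m_crit k) = sqrt (t ^ (k - 2) * (1 - t))"
    using psi_eq_sqrt[of k "sqrt t"] assms t by (simp add: m_crit_def t_def)
  also have "1 - t = 1 / (real k - 1)"
    using assms by (simp add: t_def field_simps)
  also have "(real k - 1) ^ (k - 1) = (real k - 1) ^ (k - 2) * (real k - 1)"
    using assms by (simp flip: power_Suc2 add: Suc_diff_Suc numeral_2_eq_2)
  ultimately show ?thesis
    by (simp add: t_def power_divide)
qed

lemma lam_of_pos: "p \<ge> 1 \<Longrightarrow> 0 < m \<Longrightarrow> m < 1 \<Longrightarrow> 0 < lam_of p k m"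
  by (simp add: lam_of_def psi_pos)

lemma lam_of_strict_mono:
  assumes "p \<ge> 1" "k \<ge> 1" "m_crit k \<le> a" "0 < a" "a < b" "b < 1"
  shows "lam_of p k a < lam_of p k b"
  unfolding lam_of_def using assms psi_strict_decreasing[of k a b] psi_pos[of a k] psi_pos[of b k]
  by (intro divide_strict_left_mono) auto

lemma lam_of_mono:
  assumes "p \<ge> 1" "k \<ge> 1" "m_crit k \<le> a" "0 < a" "a \<le> b" "b < 1"
  shows "lam_of p k a \<le> lam_of p k b"
  using lam_of_strict_mono[OF assms(1-4) _ assms(6)] assms(5) by (cases "a = b") auto

lemma lambda1_eq_lam_of_m_crit:
  assumes "k \<ge> 3"
  shows "lambda1 p k = lam_of p k (m_crit k)"
  using assms by (simp add: lambda1_def lam_of_def psi_m_crit real_sqrt_divide real_sqrt_mult)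

lemma mstar_eq_iff:
  assumes "lam > 0" "p \<ge> 1"
  shows "mstar_eq p k lam m \<longleftrightarrow> 0 < m \<and> m < 1 \<and> lam = lam_of p k m"
proof -
  have "mstar_eq p k lam m \<Longrightarrow> m \<noteq> 1"
    using assms by (auto simp: mstar_eq_def)
  then have "mstar_eq p k lam m \<longleftrightarrow>
      0 < m \<and> m < 1 \<and> lam * m ^ k / sqrt (real p) = m\<^sup>2 / sqrt (1 - m\<^sup>2)"
    unfolding mstar_eq_def by fastforce
  also have "\<dots> \<longleftrightarrow> 0 < m \<and> m < 1 \<and> lam = lam_of p k m"
  proof (intro conj_cong refl)
    assume "0 < m" "m < 1"
    moreover from this have "0 < sqrt (1 - m\<^sup>2)"
      by (simp add: abs_square_less_1)
    ultimately show "lam * m ^ k / sqrt (real p) = m\<^sup>2 / sqrt (1 - m\<^sup>2) \<longleftrightarrow>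
        lam = lam_of p k m"
      using assms by (simp add: lam_of_def psi_def field_simps)
  qed
  finally show ?thesis .
qed

lemma is_mstar_lam_of:
  assumes "p \<ge> 1" "k \<ge> 1" "m_crit k \<le> m" "0 < m" "m < 1"
  shows "is_mstar p k (lam_of p k m) m"
  unfolding is_mstar_def
proof (intro conjI allI impI)
  have lam: "0 < lam_of p k m"
    using assms by (simp add: lam_of_pos)
  then show "mstar_eq p k (lam_of p k m) m"
    using assms by (simp add: mstar_eq_iff)
  fix m' assume "mstar_eq p k (lam_of p k m) m'"
  then have m': "0 < m'" "m' < 1" "lam_of p k m' = lam_of p k m"
    using lam assms(1) by (auto simp: mstar_eq_iff)
  show "m' \<le> m"
  proof (rule ccontr)
    assume "\<not> m' \<le> m"
    then have "lam_of p k m < lam_of p k m'"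
      using assms m' by (intro lam_of_strict_mono) auto
    then show False
      using m' by simp
  qed
qed

lemma m_lam_le_iff:
  assumes "p \<ge> 3" "k \<ge> 1" "lam > 0" "mstar_eq p k lam m"
  shows "m_lam p k lam \<le> m \<longleftrightarrow> m_crit p \<le> m"
proof -
  have m: "0 < m" "m < 1"
    using assms mstar_eq_iff[of lam p k m] by auto
  define A where "A = (real p - 2) * sqrt (real p) / (lam * sqrt (real p - 1))"
  have "m_lam p k lam \<le> m \<longleftrightarrow> root k A \<le> root k (m ^ k)"
    using m assms(2) by (simp add: m_lam_def A_def real_root_power_cancel min_le_iff_disj)
  also have "\<dots> \<longleftrightarrow> A * lam / sqrt (real p) \<le> lam * m ^ k / sqrt (real p)"
    using assms by (simp add: divide_le_cancel mult.commute)
  also have "\<dots> \<longleftrightarrow> (m_crit p)\<^sup>2 / sqrt (1 - (m_crit p)\<^sup>2) \<le> m\<^sup>2 / sqrt (1 - m\<^sup>2)"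
    using assms by (simp add: A_def m_crit_sq_div_sqrt mstar_eq_def)
  also have "\<dots> \<longleftrightarrow> m_crit p \<le> m"
    using m assms(1) by (intro sq_div_sqrt_le_iff) (auto simp: m_crit_def)
  finally show ?thesis .
qed

lemma lambda2_eq_lambda1:
  assumes "p \<ge> 3" "p \<le> k"
  shows "lambda2 p k = lambda1 p k"
proof -
  have k: "k \<ge> 3" "m_crit p \<le> m_crit k"
    using assms m_crit_mono[of p k] by auto
  have m: "0 < m_crit k" "m_crit k < 1"
    using k m_crit_pos_less_one by auto
  have lam: "0 < lambda1 p k"
    using k m assms by (simp add: lambda1_eq_lam_of_m_crit lam_of_pos)
  have "is_mstar p k (lambda1 p k) (m_crit k)"
    using k m assms by (simp add: lambda1_eq_lam_of_m_crit is_mstar_lam_of)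
  moreover from this have "m_lam p k (lambda1 p k) \<le> m_crit k"
    using k lam assms by (simp add: m_lam_le_iff is_mstar_def)
  ultimately show ?thesis
    unfolding lambda2_def using lam by (intro cInf_eq_minimum) auto
qed

lemma lambda1_less_lam_of_m_crit:
  assumes "p \<ge> 3" "k \<ge> 1" "k < p"
  shows "lambda1 p k < lam_of p k (m_crit p)"
proof (cases "k \<ge> 3")
  case True
  then show ?thesis
    using assms m_crit_strict_mono[of k p] m_crit_pos_less_one[of k] m_crit_pos_less_one[of p]
    by (simp add: lambda1_eq_lam_of_m_crit lam_of_strict_mono)
next
  case False
  then show ?thesis
    using assms m_crit_pos_less_one[of p] by (simp add: lambda1_def lam_of_pos)
qed

lemma lambda2_eq_lam_of_m_crit:
  assumes "p \<ge> 3" "k \<ge> 1" "k < p"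
  shows "lambda2 p k = lam_of p k (m_crit p)"
proof -
  have m: "0 < m_crit p" "m_crit p < 1" "m_crit k \<le> m_crit p"
    using assms m_crit_pos_less_one[of p] m_crit_mono[of k p] by auto
  have lam: "0 < lam_of p k (m_crit p)"
    using assms m by (simp add: lam_of_pos)
  have "is_mstar p k (lam_of p k (m_crit p)) (m_crit p)"
    using assms m by (simp add: is_mstar_lam_of)
  moreover from this have "m_lam p k (lam_of p k (m_crit p)) \<le> m_crit p"
    using assms lam by (simp add: m_lam_le_iff is_mstar_def)
  moreover have "lam_of p k (m_crit p) \<le> lam"
    if "lam > 0" "is_mstar p k lam m" "m_lam p k lam \<le> m" for lam m
  proof -
    have "0 < m" "m < 1" "lam = lam_of p k m" "m_crit p \<le> m"
      using that assms by (auto simp: is_mstar_def mstar_eq_iff m_lam_le_iff)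
    then show ?thesis
      using assms m by (simp add: lam_of_mono)
  qed
  ultimately show ?thesis
    unfolding lambda2_def using lam lambda1_less_lam_of_m_crit[OF assms]
    by (intro cInf_eq_minimum) auto
qed

theorem lemmaB3:
  fixes p k :: nat
  assumes "p \<ge> 3" and "k \<ge> 1"
  shows "lambda1 p k = lambda2 p k \<longleftrightarrow> p \<le> k"
proof (cases "p \<le> k")
  case True
  then show ?thesis
    using assms by (simp add: lambda2_eq_lambda1)
next
  case False
  then show ?thesis
    using assms lambda1_less_lam_of_m_crit[of p k] by (simp add: lambda2_eq_lam_of_m_crit)
qed

end
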